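(* Let $q$ be a prime power and let $ER(q)$ be the Erdős–Rényi graph. Then every independent set $S$ of $ER(q)$ satisfies \[ |S|\le \frac{\sqrt q+\sqrt{q+4(q+1)\frac{q+\sqrt q+1}{q^2+q+1}}}{2\,\frac{q+\sqrt q+1}{q^2+q+1}}. \]
   Context: Let $V=\mathbb F_q^3$. The vertices of $ER(q)$ are the $q^2+q+1$ one-dimensional subspaces of $V$ (points of $PG(2,q)$); points spanned by $x$ and $y$ are adjacent iff $x^Ty=0$. The $q+1$ points with $x^Tx=0$ are adjacent to themselves (carry loops). An independent set is a set of vertices no two distinct members of which are adjacent; looped vertices may belong to it. *)

theory Defs
  imports Complex_Main
begin

definition smult3 :: "'a::field \<Rightarrow> 'a \<times> 'a \<times> 'a \<Rightarrow> 'a \<times> 'a \<times> 'a" where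
  "smult3 c v = (case v of (a, b, d) \<Rightarrow> (c * a, c * b, c * d))"

definition dot3 :: "'a::field \<times> 'a \<times> 'a \<Rightarrow> 'a \<times> 'a \<times> 'a \<Rightarrow> 'a" where
  "dot3 x y = (case x of (a1, a2, a3) \<Rightarrow> case y of (b1, b2, b3) \<Rightarrow> a1 * b1 + a2 * b2 + a3 * b3)"

definition span1 :: "'a::field \<times> 'a \<times> 'a \<Rightarrow> ('a \<times> 'a \<times> 'a) set" where
  "span1 x = {smult3 c x | c. True}"

definition er_vertices :: "('a::field \<times> 'a \<times> 'a) set set" where
  "er_vertices = {span1 x | x. x \<noteq> (0, 0, 0)}"

definition er_adj :: "('a::field \<times> 'a \<times> 'a) set \<Rightarrow> ('a \<times> 'a \<times> 'a) set \<Rightarrow> bool" where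
  "er_adj P Q = (\<exists>x y. x \<noteq> (0, 0, 0) \<and> y \<noteq> (0, 0, 0) \<and> P = span1 x \<and> Q = span1 y \<and> dot3 x y = 0)"

text \<open>Independent set: no two distinct members adjacent; looped vertices allowed.\<close>
definition er_independent :: "('a::field \<times> 'a \<times> 'a) set set \<Rightarrow> bool" where
  "er_independent S = (S \<subseteq> er_vertices \<and> (\<forall>P\<in>S. \<forall>Q\<in>S. P \<noteq> Q \<longrightarrow> \<not> er_adj P Q))"

end

(* Weight every point v of PG(2,q) by w v = d v + sqrt q * [v in S], where d v counts the members
   of S adjacent to v. Every point has q + 1 neighbours and two distinct points have exactly one
   common neighbour, so with s = |S| we get sum w = s (q + 1 + sqrt q) and
   sum w^2 <= s (q + s) + 2 sqrt q a + q s, where a is the number of looped points of S (on S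
   itself, independence leaves only the loops in d). There are at most q + 1 such points: in
   characteristic 2 they lie on one line, otherwise distinct ones have distinct common neighbours
   with a fixed looped point of S. Cauchy-Schwarz over the q^2 + q + 1 points then gives
   r s^2 <= sqrt q s + q + 1 with r = (q + sqrt q + 1) / (q^2 + q + 1), and s is at most the
   positive root of this quadratic. *)

theory Submission
  imports Defs "HOL-Library.Cardinality" "HOL-Analysis.Convex"
begin

section \<open>Dot and cross products of triples\<close>

lemma smult3_simp [simp]: "smult3 c (x1, x2, x3) = (c * x1, c * x2, c * x3)"
  by (simp add: smult3_def)

lemma dot3_simp [simp]: "dot3 (x1, x2, x3) (y1, y2, y3) = x1 * y1 + x2 * y2 + x3 * y3"
  by (simp add: dot3_def)

lemma dot3_commute: "dot3 x y = dot3 y x"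
  by (cases x; cases y) (simp add: mult.commute)

lemma dot3_smult3_left: "dot3 (smult3 c x) y = c * dot3 x y"
  by (cases x; cases y) (simp add: algebra_simps)

lemma dot3_smult3_right: "dot3 x (smult3 c y) = c * dot3 x y"
  by (cases x; cases y) (simp add: algebra_simps)

lemma smult3_eq_0_iff: "smult3 c x = (0, 0, 0) \<longleftrightarrow> c = 0 \<or> x = (0, 0, 0)"
  by (cases x) auto

definition cross3 :: "'a::field \<times> 'a \<times> 'a \<Rightarrow> 'a \<times> 'a \<times> 'a \<Rightarrow> 'a \<times> 'a \<times> 'a" where
  "cross3 x y = (case x of (x1, x2, x3) \<Rightarrow> case y of (y1, y2, y3) \<Rightarrow>
     (x2 * y3 - x3 * y2, x3 * y1 - x1 * y3, x1 * y2 - x2 * y1))"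

lemma cross3_simp [simp]:
  "cross3 (x1, x2, x3) (y1, y2, y3) = (x2 * y3 - x3 * y2, x3 * y1 - x1 * y3, x1 * y2 - x2 * y1)"
  by (simp add: cross3_def)

lemma dot3_cross3_left: "dot3 x (cross3 x y) = 0"
  by (cases x; cases y) (simp add: algebra_simps)

lemma dot3_cross3_right: "dot3 y (cross3 x y) = 0"
  by (cases x; cases y) (simp add: algebra_simps)

lemma cross3_cross3_eq_0:
  assumes "dot3 z x = 0" "dot3 z y = 0"
  shows "cross3 z (cross3 x y) = (0, 0, 0)"
proof -
  obtain x1 x2 x3 y1 y2 y3 z1 z2 z3 where xyz: "x = (x1, x2, x3)" "y = (y1, y2, y3)" "z = (z1, z2, z3)"
    by (cases x; cases y; cases z)
  let ?zx = "z1 * x1 + z2 * x2 + z3 * x3" and ?zy = "z1 * y1 + z2 * y2 + z3 * y3"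
  have "cross3 z (cross3 x y) = (x1 * ?zy - y1 * ?zx, x2 * ?zy - y2 * ?zx, x3 * ?zy - y3 * ?zx)"
    using xyz by (simp add: algebra_simps)
  then show ?thesis
    using assms xyz by simp
qed

lemma cross3_eq_0_commute: "cross3 x y = (0, 0, 0) \<longleftrightarrow> cross3 y x = (0, 0, 0)"
  by (cases x; cases y) (auto simp: mult.commute)

lemma cross3_eq_0_imp_in_span1:
  assumes "x \<noteq> (0, 0, 0)" "cross3 x y = (0, 0, 0)"
  shows "y \<in> span1 x"
proof -
  obtain x1 x2 x3 y1 y2 y3 where xy: "x = (x1, x2, x3)" "y = (y1, y2, y3)"
    by (cases x; cases y)
  have eqs: "x2 * y3 = x3 * y2" "x3 * y1 = x1 * y3" "x1 * y2 = x2 * y1"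
    using assms(2) xy by auto
  consider "x1 \<noteq> 0" | "x2 \<noteq> 0" | "x3 \<noteq> 0"
    using assms(1) xy by auto
  then have "\<exists>c. y = smult3 c x"
  proof cases
    case 1
    then show ?thesis using eqs xy by (intro exI[of _ "y1 / x1"]) (auto simp: field_simps)
  next
    case 2
    then show ?thesis using eqs xy by (intro exI[of _ "y2 / x2"]) (auto simp: field_simps)
  next
    case 3
    then show ?thesis using eqs xy by (intro exI[of _ "y3 / x3"]) (auto simp: field_simps)
  qed
  then show ?thesis
    by (auto simp: span1_def)
qed

lemma dot3_cross3_square:
  "(dot3 p (cross3 y w))^2 =
     dot3 p p * dot3 y y * dot3 w w + 2 * (dot3 p y * dot3 y w * dot3 w p)
     - dot3 p p * (dot3 y w)^2 - dot3 y y * (dot3 w p)^2 - dot3 w w * (dot3 p y)^2"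
proof -
  obtain p1 p2 p3 y1 y2 y3 w1 w2 w3 where pyw: "p = (p1, p2, p3)" "y = (y1, y2, y3)" "w = (w1, w2, w3)"
    by (cases p; cases y; cases w)
  show ?thesis
    unfolding pyw dot3_simp cross3_simp by algebra
qed

lemma dot3_cross3_eq_0_if_orthogonal:
  assumes "c \<noteq> (0, 0, 0)" "dot3 c p = 0" "dot3 c y = 0" "dot3 c w = 0"
  shows "dot3 p (cross3 y w) = 0"
proof (cases "cross3 y w = (0, 0, 0)")
  case True
  then show ?thesis by (cases p) simp
next
  case False
  have "c \<in> span1 (cross3 y w)"
    using cross3_eq_0_imp_in_span1[OF False] cross3_cross3_eq_0[OF assms(3,4)]
    by (simp add: cross3_eq_0_commute)
  then obtain l where l: "c = smult3 l (cross3 y w)"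
    by (auto simp: span1_def)
  with assms(1) have "l \<noteq> 0"
    by (auto simp: smult3_eq_0_iff)
  moreover have "l * dot3 p (cross3 y w) = 0"
    using assms(2) l by (simp add: dot3_commute dot3_smult3_right)
  ultimately show ?thesis by simp
qed

text \<open>The triple product of coplanar vectors vanishes, while its square is the Gram determinant,
  which is \<open>2 (p\<cdot>y)(y\<cdot>w)(w\<cdot>p)\<close> when the diagonal is zero.\<close>

lemma isotropic_orthogonal_triple:
  fixes c p y w :: "'a::field \<times> 'a \<times> 'a"
  assumes "(2::'a) \<noteq> 0" "c \<noteq> (0, 0, 0)"
    and "dot3 c p = 0" "dot3 c y = 0" "dot3 c w = 0"
    and "dot3 p p = 0" "dot3 y y = 0" "dot3 w w = 0"
  shows "dot3 p y * dot3 y w * dot3 w p = 0"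
proof -
  have "2 * (dot3 p y * dot3 y w * dot3 w p) = (dot3 p (cross3 y w))^2"
    using assms(6-8) by (simp add: dot3_cross3_square)
  also have "\<dots> = 0"
    using dot3_cross3_eq_0_if_orthogonal[OF assms(2-5)] by simp
  finally show ?thesis
    using assms(1) by simp
qed

lemma isotropic_char2_orthogonal_ones:
  fixes x :: "'a::field \<times> 'a \<times> 'a"
  assumes "(2::'a) = 0" "dot3 x x = 0"
  shows "dot3 x (1, 1, 1) = 0"
proof -
  obtain x1 x2 x3 where x: "x = (x1, x2, x3)"
    by (cases x)
  have "(x1 + x2 + x3)^2 = dot3 x x + 2 * (x1 * x2 + x1 * x3 + x2 * x3)"
    unfolding x dot3_simp by algebra
  then show ?thesis
    using assms x by simp
qed

section \<open>Points of the projective plane\<close>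

lemma span1_self: "x \<in> span1 x"
  by (cases x) (auto simp: span1_def intro!: exI[of _ 1])

lemma zero_in_span1: "(0, 0, 0) \<in> span1 x"
  by (cases x) (auto simp: span1_def intro!: exI[of _ 0])

lemma span1_eq_if_in_span1:
  assumes "y \<in> span1 x" "y \<noteq> (0, 0, 0)"
  shows "span1 y = span1 x"
proof -
  obtain c where c: "y = smult3 c x"
    using assms(1) by (auto simp: span1_def)
  with assms(2) have "c \<noteq> 0"
    by (auto simp: smult3_eq_0_iff)
  have "smult3 d y = smult3 (d * c) x" for d
    using c by (cases x) (simp add: mult.assoc)
  moreover have "smult3 d x = smult3 (d / c) y" for d
    using c \<open>c \<noteq> 0\<close> by (cases x) simp
  ultimately show ?thesis
    unfolding span1_def by blast
qed

lemma card_span1: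
  assumes "x \<noteq> (0, 0, 0)"
  shows "card (span1 x :: ('a::{finite,field} \<times> 'a \<times> 'a) set) = CARD('a)"
proof -
  have "span1 x = range (\<lambda>c. smult3 c x)"
    unfolding span1_def by auto
  moreover have "inj (\<lambda>c. smult3 c x)"
    using assms by (cases x) (auto intro!: injI)
  ultimately show ?thesis
    by (simp add: card_image)
qed

lemma span1_in_er_vertices: "x \<noteq> (0, 0, 0) \<Longrightarrow> span1 x \<in> er_vertices"
  unfolding er_vertices_def by blast

lemma er_verticesE:
  assumes "P \<in> er_vertices"
  obtains x where "x \<noteq> (0, 0, 0)" "P = span1 x"
  using assms unfolding er_vertices_def by blast

lemma er_adj_imp_vertices: "er_adj P Q \<Longrightarrow> P \<in> er_vertices \<and> Q \<in> er_vertices"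
  unfolding er_adj_def er_vertices_def by blast

lemma er_adj_span1_iff:
  assumes "x \<noteq> (0, 0, 0)" "y \<noteq> (0, 0, 0)"
  shows "er_adj (span1 x) (span1 y) \<longleftrightarrow> dot3 x y = 0"
proof
  assume "er_adj (span1 x) (span1 y)"
  then obtain x' y' where "span1 x = span1 x'" "span1 y = span1 y'" "dot3 x' y' = 0"
    unfolding er_adj_def by blast
  moreover from this obtain c d where "x = smult3 c x'" "y = smult3 d y'"
    using span1_self[of x] span1_self[of y] by (auto simp: span1_def)
  ultimately show "dot3 x y = 0"
    by (simp add: dot3_smult3_left dot3_smult3_right)
next
  assume "dot3 x y = 0"
  with assms show "er_adj (span1 x) (span1 y)"
    unfolding er_adj_def by blast
qed

section \<open>Counting points, neighbours and common neighbours\<close>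

lemma two_le_card_field: "2 \<le> CARD('a::{finite,field})"
proof -
  have "card {0::'a, 1} \<le> CARD('a)"
    by (rule card_mono) auto
  then show ?thesis
    by simp
qed

lemma card_cone:
  fixes A :: "('a::{finite,field} \<times> 'a \<times> 'a) set"
  assumes "(0, 0, 0) \<notin> A" and "\<And>y c. y \<in> A \<Longrightarrow> c \<noteq> 0 \<Longrightarrow> smult3 c y \<in> A"
  shows "(CARD('a) - 1) * card (span1 ` A) = card A"
proof -
  have fibre: "{y \<in> A. span1 y = span1 x} = span1 x - {(0, 0, 0)}" if "x \<in> A" for x
  proof (intro equalityI subsetI)
    fix y
    assume "y \<in> {y \<in> A. span1 y = span1 x}"
    then show "y \<in> span1 x - {(0, 0, 0)}"
      using span1_self[of y] assms(1) by auto
  next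
    fix y
    assume y: "y \<in> span1 x - {(0, 0, 0)}"
    then obtain c where c: "y = smult3 c x"
      by (auto simp: span1_def)
    with y have "c \<noteq> 0"
      by (auto simp: smult3_eq_0_iff)
    with c that assms(2) have "y \<in> A"
      by blast
    with y span1_eq_if_in_span1 show "y \<in> {y \<in> A. span1 y = span1 x}"
      by blast
  qed
  have "card A = (\<Sum>P \<in> span1 ` A. card {y \<in> A. span1 y = P})"
    using sum.group[of A "span1 ` A" span1 "\<lambda>_. 1 :: nat"] by simp
  also have "\<dots> = (\<Sum>P \<in> span1 ` A. CARD('a) - 1)"
  proof (rule sum.cong[OF refl])
    fix P
    assume "P \<in> span1 ` A"
    then obtain x where x: "x \<in> A" "P = span1 x"
      by blast
    with assms(1) have "x \<noteq> (0, 0, 0)"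
      by auto
    then show "card {y \<in> A. span1 y = P} = CARD('a) - 1"
      using fibre[OF x(1)] x(2) by (simp add: card_Diff_singleton card_span1 zero_in_span1)
  qed
  finally show ?thesis
    by simp
qed

lemma card_er_vertices:
  "card (er_vertices :: ('a::{finite,field} \<times> 'a \<times> 'a) set set) = CARD('a)^2 + CARD('a) + 1"
proof -
  let ?A = "UNIV - {(0, 0, 0)} :: ('a \<times> 'a \<times> 'a) set"
  have "span1 ` ?A = er_vertices"
    unfolding er_vertices_def by auto
  then have "(CARD('a) - 1) * card (er_vertices :: ('a \<times> 'a \<times> 'a) set set) = card ?A"
    using card_cone[of ?A] by (auto simp: smult3_eq_0_iff)
  also have "card ?A = CARD('a)^3 - 1"
    by (simp add: card_Diff_singleton power3_eq_cube)
  also have "\<dots> = (CARD('a) - 1) * (CARD('a)^2 + CARD('a) + 1)"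
    by (cases "CARD('a)") (simp_all add: algebra_simps power2_eq_square power3_eq_cube)
  finally have "(CARD('a) - 1) * card (er_vertices :: ('a \<times> 'a \<times> 'a) set set)
      = (CARD('a) - 1) * (CARD('a)^2 + CARD('a) + 1)" .
  moreover have "CARD('a) - 1 \<noteq> 0"
    using two_le_card_field[where 'a='a] by simp
  ultimately show ?thesis
    by (metis mult_left_cancel)
qed

lemma card_orthogonal_first:
  fixes a b c :: "'a::{finite,field}"
  assumes "a \<noteq> 0"
  shows "card {y. dot3 y (a, b, c) = 0} = CARD('a)^2"
proof -
  have "bij_betw (\<lambda>(u, v). (- (u * b + v * c) / a, u, v)) UNIV {y. dot3 y (a, b, c) = 0}"
    by (rule bij_betw_byWitness[where f' = "\<lambda>(y1, y2, y3). (y2, y3)"])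
      (use assms in \<open>auto simp: field_simps neg_eq_iff_add_eq_0 add_ac\<close>)
  then show ?thesis
    by (simp add: bij_betw_same_card[symmetric] power2_eq_square)
qed

lemma card_orthogonal_rotate:
  "card {y. dot3 y (a, b, c) = 0} = card {y. dot3 y (b, c, a) = 0}"
proof -
  have "bij_betw (\<lambda>(y1, y2, y3). (y3, y1, y2)) {y. dot3 y (b, c, a) = 0} {y. dot3 y (a, b, c) = 0}"
    by (rule bij_betw_byWitness[where f' = "\<lambda>(y1, y2, y3). (y2, y3, y1)"]) (auto simp: algebra_simps)
  then show ?thesis
    by (simp add: bij_betw_same_card)
qed

lemma card_orthogonal:
  fixes x :: "'a::{finite,field} \<times> 'a \<times> 'a"
  assumes "x \<noteq> (0, 0, 0)"
  shows "card {y. dot3 y x = 0} = CARD('a)^2"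
proof -
  obtain a b c where x: "x = (a, b, c)"
    by (cases x)
  consider "a \<noteq> 0" | "b \<noteq> 0" | "c \<noteq> 0"
    using assms x by auto
  then show ?thesis
    unfolding x by cases (metis card_orthogonal_first card_orthogonal_rotate)+
qed

lemma er_neighbours_span1:
  assumes "x \<noteq> (0, 0, 0)"
  shows "{v \<in> er_vertices. er_adj v (span1 x)} = span1 ` ({y. dot3 y x = 0} - {(0, 0, 0)})"
proof (intro equalityI subsetI)
  fix v
  assume v: "v \<in> {v \<in> er_vertices. er_adj v (span1 x)}"
  then have "v \<in> er_vertices"
    by simp
  then obtain y where "y \<noteq> (0, 0, 0)" "v = span1 y"
    by (rule er_verticesE)
  with v assms show "v \<in> span1 ` ({y. dot3 y x = 0} - {(0, 0, 0)})"
    by (auto simp: er_adj_span1_iff)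
next
  fix v
  assume "v \<in> span1 ` ({y. dot3 y x = 0} - {(0, 0, 0)})"
  then obtain y where y: "y \<noteq> (0, 0, 0)" "dot3 y x = 0" "v = span1 y"
    by blast
  with assms show "v \<in> {v \<in> er_vertices. er_adj v (span1 x)}"
    by (simp add: er_adj_span1_iff span1_in_er_vertices)
qed

lemma er_degree:
  fixes P :: "('a::{finite,field} \<times> 'a \<times> 'a) set"
  assumes "P \<in> er_vertices"
  shows "card {v \<in> er_vertices. er_adj v P} = CARD('a) + 1"
proof -
  obtain x where x: "x \<noteq> (0, 0, 0)" "P = span1 x"
    using assms by (rule er_verticesE)
  let ?A = "{y. dot3 y x = 0} - {(0, 0, 0)}"
  have "(CARD('a) - 1) * card {v \<in> er_vertices. er_adj v P} = card ?A"
    unfolding x(2) er_neighbours_span1[OF x(1)]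
    by (rule card_cone) (auto simp: dot3_smult3_left smult3_eq_0_iff)
  also have "\<dots> = CARD('a)^2 - 1"
    using card_orthogonal[OF x(1)] by (cases x) (simp add: card_Diff_singleton)
  also have "\<dots> = (CARD('a) - 1) * (CARD('a) + 1)"
    by (simp add: diff_mult_distrib power2_eq_square algebra_simps)
  finally have "(CARD('a) - 1) * card {v \<in> er_vertices. er_adj v P} = (CARD('a) - 1) * (CARD('a) + 1)" .
  moreover have "CARD('a) - 1 \<noteq> 0"
    using two_le_card_field[where 'a='a] by simp
  ultimately show ?thesis
    by (metis mult_left_cancel)
qed

lemma cross3_neq_0:
  assumes "x \<noteq> (0, 0, 0)" "y \<noteq> (0, 0, 0)" "span1 x \<noteq> span1 y"
  shows "cross3 x y \<noteq> (0, 0, 0)"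
proof
  assume "cross3 x y = (0, 0, 0)"
  with assms(1) have "y \<in> span1 x"
    by (rule cross3_eq_0_imp_in_span1)
  with assms(2,3) span1_eq_if_in_span1 show False
    by metis
qed

lemma er_common_neighbours_span1:
  assumes "x \<noteq> (0, 0, 0)" "y \<noteq> (0, 0, 0)" "span1 x \<noteq> span1 y"
  shows "{v \<in> er_vertices. er_adj v (span1 x) \<and> er_adj v (span1 y)} = {span1 (cross3 x y)}"
proof -
  let ?c = "cross3 x y"
  have c: "?c \<noteq> (0, 0, 0)"
    using assms by (rule cross3_neq_0)
  show ?thesis
  proof (intro equalityI subsetI)
    fix v
    assume v: "v \<in> {v \<in> er_vertices. er_adj v (span1 x) \<and> er_adj v (span1 y)}"
    then have "v \<in> er_vertices"
      by simp
    then obtain z where z: "z \<noteq> (0, 0, 0)" "v = span1 z"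
      by (rule er_verticesE)
    with v assms have "dot3 z x = 0" "dot3 z y = 0"
      by (auto simp: er_adj_span1_iff)
    then have "cross3 z ?c = (0, 0, 0)"
      by (rule cross3_cross3_eq_0)
    then have "z \<in> span1 ?c"
      using cross3_eq_0_imp_in_span1[OF c] cross3_eq_0_commute by blast
    with z span1_eq_if_in_span1 show "v \<in> {span1 ?c}"
      by simp
  next
    fix v
    assume "v \<in> {span1 ?c}"
    then have v: "v = span1 ?c"
      by simp
    have "dot3 ?c x = 0" "dot3 ?c y = 0"
      by (metis dot3_commute dot3_cross3_left, metis dot3_commute dot3_cross3_right)
    then have "er_adj (span1 ?c) (span1 x)" "er_adj (span1 ?c) (span1 y)"
      using er_adj_span1_iff[OF c assms(1)] er_adj_span1_iff[OF c assms(2)] by simp_all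
    with v c show "v \<in> {v \<in> er_vertices. er_adj v (span1 x) \<and> er_adj v (span1 y)}"
      by (simp add: span1_in_er_vertices)
  qed
qed

lemma er_the_common_neighbour:
  assumes "P \<in> er_vertices" "Q \<in> er_vertices" "P \<noteq> Q"
  defines "R \<equiv> the_elem {v \<in> er_vertices. er_adj v P \<and> er_adj v Q}"
  shows "{v \<in> er_vertices. er_adj v P \<and> er_adj v Q} = {R}"
proof -
  obtain x where x: "x \<noteq> (0, 0, 0)" "P = span1 x"
    using assms(1) by (rule er_verticesE)
  obtain y where y: "y \<noteq> (0, 0, 0)" "Q = span1 y"
    using assms(2) by (rule er_verticesE)
  have "{v \<in> er_vertices. er_adj v P \<and> er_adj v Q} = {span1 (cross3 x y)}"
    using er_common_neighbours_span1[OF x(1) y(1)] x(2) y(2) assms(3) by simp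
  then show ?thesis
    unfolding R_def by simp
qed

lemma card_er_common_neighbours:
  assumes "P \<in> er_vertices" "Q \<in> er_vertices" "P \<noteq> Q"
  shows "card {v \<in> er_vertices. er_adj v P \<and> er_adj v Q} = 1"
  by (subst er_the_common_neighbour[OF assms]) simp

section \<open>Looped vertices of an independent set\<close>

lemma er_looped_common_neighbour:
  fixes P Q Q' R :: "('a::field \<times> 'a \<times> 'a) set"
  assumes "(2::'a) \<noteq> 0" "er_adj P P" "er_adj Q Q" "er_adj Q' Q'"
    and "er_adj R P" "er_adj R Q" "er_adj R Q'"
  shows "er_adj P Q \<or> er_adj Q Q' \<or> er_adj Q' P"
proof -
  obtain c where c: "c \<noteq> (0, 0, 0)" "R = span1 c"
    using assms(5) er_adj_imp_vertices er_verticesE by metis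
  obtain p where p: "p \<noteq> (0, 0, 0)" "P = span1 p"
    using assms(2) er_adj_imp_vertices er_verticesE by metis
  obtain y where y: "y \<noteq> (0, 0, 0)" "Q = span1 y"
    using assms(3) er_adj_imp_vertices er_verticesE by metis
  obtain w where w: "w \<noteq> (0, 0, 0)" "Q' = span1 w"
    using assms(4) er_adj_imp_vertices er_verticesE by metis
  have "dot3 c p = 0" "dot3 c y = 0" "dot3 c w = 0" "dot3 p p = 0" "dot3 y y = 0" "dot3 w w = 0"
    using assms(2-7) by (simp_all add: c p y w er_adj_span1_iff)
  then have "dot3 p y * dot3 y w * dot3 w p = 0"
    by (rule isotropic_orthogonal_triple[OF assms(1) c(1)])
  then show ?thesis
    by (simp add: p y w er_adj_span1_iff)
qed

lemma er_looped_char2: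
  fixes P :: "('a::field \<times> 'a \<times> 'a) set"
  assumes "(2::'a) = 0" "er_adj P P"
  shows "er_adj P (span1 (1, 1, 1))"
proof -
  obtain x where x: "x \<noteq> (0, 0, 0)" "P = span1 x"
    using assms(2) er_adj_imp_vertices er_verticesE by metis
  with assms(2) have "dot3 x x = 0"
    by (simp add: er_adj_span1_iff)
  with x show ?thesis
    by (simp add: er_adj_span1_iff isotropic_char2_orthogonal_ones[OF assms(1)])
qed

lemma card_er_looped_remove_le:
  fixes S :: "('a::{finite,field} \<times> 'a \<times> 'a) set set"
  assumes "(2::'a) \<noteq> 0" "er_independent S" "P0 \<in> S" "er_adj P0 P0"
  shows "card ({P \<in> S. er_adj P P} - {P0}) \<le> CARD('a)"
proof -
  let ?T = "{P \<in> S. er_adj P P} - {P0}"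
  let ?N = "{v \<in> er_vertices. er_adj v P0}"
  have S: "S \<subseteq> er_vertices" and indep: "\<And>P Q. P \<in> S \<Longrightarrow> Q \<in> S \<Longrightarrow> P \<noteq> Q \<Longrightarrow> \<not> er_adj P Q"
    using assms(2) unfolding er_independent_def by auto
  define g where "g Q = the_elem {v \<in> er_vertices. er_adj v P0 \<and> er_adj v Q}" for Q
  have g: "g Q \<in> ?N \<and> er_adj (g Q) Q" if "Q \<in> ?T" for Q
  proof -
    have "{v \<in> er_vertices. er_adj v P0 \<and> er_adj v Q} = {g Q}"
      unfolding g_def using that assms(3) S by (intro er_the_common_neighbour) auto
    then have "g Q \<in> {v \<in> er_vertices. er_adj v P0 \<and> er_adj v Q}"
      by simp
    then show ?thesis
      by simp
  qed
  have "g ` ?T \<subseteq> ?N - {P0}"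
  proof (rule image_subsetI)
    fix Q
    assume Q: "Q \<in> ?T"
    with assms(3) indep have "\<not> er_adj P0 Q"
      by blast
    with g[OF Q] show "g Q \<in> ?N - {P0}"
      by auto
  qed
  moreover have "inj_on g ?T"
  proof (rule inj_onI, rule ccontr)
    fix Q Q'
    assume Q: "Q \<in> ?T" and Q': "Q' \<in> ?T" and "g Q = g Q'" "Q \<noteq> Q'"
    then have "er_adj (g Q) P0" "er_adj (g Q) Q" "er_adj (g Q) Q'"
      using g[OF Q] g[OF Q'] by auto
    moreover have "er_adj Q Q" "er_adj Q' Q'"
      using Q Q' by auto
    ultimately have "er_adj P0 Q \<or> er_adj Q Q' \<or> er_adj Q' P0"
      using er_looped_common_neighbour[OF assms(1,4)] by blast
    with Q Q' assms(3) \<open>Q \<noteq> Q'\<close> indep show False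
      by blast
  qed
  ultimately have "card ?T \<le> card (?N - {P0})"
    by (intro card_inj_on_le) auto
  also have "\<dots> = CARD('a)"
    using er_degree[of P0] assms(3,4) S by (auto simp: card_Diff_singleton)
  finally show ?thesis .
qed

lemma card_er_looped_le:
  fixes S :: "('a::{finite,field} \<times> 'a \<times> 'a) set set"
  assumes "er_independent S"
  shows "card {P \<in> S. er_adj P P} \<le> CARD('a) + 1"
proof (cases "(2::'a) = 0")
  case True
  have "card {P \<in> S. er_adj P P} \<le> card {v \<in> er_vertices. er_adj v (span1 (1, 1, 1 :: 'a))}"
    using er_looped_char2[OF True] er_adj_imp_vertices by (intro card_mono) auto
  also have "\<dots> = CARD('a) + 1"
    by (simp add: er_degree span1_in_er_vertices)
  finally show ?thesis .
next
  case False
  show ?thesis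
  proof (cases "{P \<in> S. er_adj P P} = {}")
    case True
    then show ?thesis
      unfolding True by simp
  next
    case False
    then obtain P0 where P0: "P0 \<in> S" "er_adj P0 P0"
      by blast
    with \<open>(2::'a) \<noteq> 0\<close> assms have "card ({P \<in> S. er_adj P P} - {P0}) \<le> CARD('a)"
      by (rule card_er_looped_remove_le)
    with P0 show ?thesis
      by (simp add: card_Diff_singleton)
  qed
qed

section \<open>Independent sets in graphs of codegree at most one\<close>

lemma sum_card_neighbours:
  fixes adj :: "'v \<Rightarrow> 'v \<Rightarrow> bool"
  assumes "finite V" "S \<subseteq> V" "\<And>P. P \<in> V \<Longrightarrow> card {v \<in> V. adj v P} = k"
  shows "(\<Sum>v\<in>V. card {P \<in> S. adj v P}) = card S * k"
proof -
  have "finite S"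
    using assms(1,2) by (rule finite_subset[rotated])
  then have "(\<Sum>v\<in>V. card {P \<in> S. adj v P}) = (\<Sum>v\<in>V. \<Sum>P\<in>S. of_bool (adj v P))"
    by (simp add: Int_def)
  also have "\<dots> = (\<Sum>P\<in>S. \<Sum>v\<in>V. of_bool (adj v P))"
    by (rule sum.swap)
  also have "\<dots> = (\<Sum>P\<in>S. k)"
    using assms by (intro sum.cong) (auto simp: Int_def)
  finally show ?thesis
    by simp
qed

lemma sum_card_neighbours_independent:
  fixes adj :: "'v \<Rightarrow> 'v \<Rightarrow> bool"
  assumes "finite S" and "\<And>P Q. P \<in> S \<Longrightarrow> Q \<in> S \<Longrightarrow> P \<noteq> Q \<Longrightarrow> \<not> adj P Q"
  shows "(\<Sum>v\<in>S. card {P \<in> S. adj v P}) = card {P \<in> S. adj P P}"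
proof -
  have "card {P \<in> S. adj v P} = of_bool (adj v v)" if "v \<in> S" for v
  proof -
    have "{P \<in> S. adj v P} = (if adj v v then {v} else {})"
      using assms(2) that by auto
    then show ?thesis
      by simp
  qed
  then have "(\<Sum>v\<in>S. card {P \<in> S. adj v P}) = (\<Sum>v\<in>S. of_bool (adj v v))"
    by (rule sum.cong[OF refl])
  also have "\<dots> = card {P \<in> S. adj P P}"
    using assms(1) by (simp add: Int_def)
  finally show ?thesis .
qed

lemma sum_card_neighbours_squared_le:
  fixes adj :: "'v \<Rightarrow> 'v \<Rightarrow> bool"
  assumes "finite V" "S \<subseteq> V"
    and deg: "\<And>P. P \<in> V \<Longrightarrow> card {v \<in> V. adj v P} = k"
    and codeg: "\<And>P Q. P \<in> V \<Longrightarrow> Q \<in> V \<Longrightarrow> P \<noteq> Q \<Longrightarrow> card {v \<in> V. adj v P \<and> adj v Q} \<le> 1"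
  shows "(\<Sum>v\<in>V. real (card {P \<in> S. adj v P})^2) \<le> real (card S) * (real k + real (card S) - 1)"
proof -
  have S: "finite S"
    using assms(1,2) by (rule finite_subset[rotated])
  have d: "real (card {P \<in> S. adj v P}) = (\<Sum>P\<in>S. of_bool (adj v P))" for v
    using S by (simp add: Int_def)
  have "(\<Sum>v\<in>V. real (card {P \<in> S. adj v P})^2)
      = (\<Sum>v\<in>V. \<Sum>P\<in>S. \<Sum>Q\<in>S. of_bool (adj v P \<and> adj v Q))"
    by (simp only: d power2_eq_square sum_product of_bool_conj)
  also have "\<dots> = (\<Sum>P\<in>S. \<Sum>v\<in>V. \<Sum>Q\<in>S. of_bool (adj v P \<and> adj v Q))"
    by (rule sum.swap)
  also have "\<dots> = (\<Sum>P\<in>S. \<Sum>Q\<in>S. \<Sum>v\<in>V. of_bool (adj v P \<and> adj v Q))"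
    by (rule sum.cong[OF refl], rule sum.swap)
  also have "\<dots> = (\<Sum>P\<in>S. \<Sum>Q\<in>S. real (card {v \<in> V. adj v P \<and> adj v Q}))"
    using assms(1) by (simp add: Int_def)
  also have "\<dots> \<le> (\<Sum>P\<in>S. \<Sum>Q\<in>S. if Q = P then real k else 1)"
  proof (intro sum_mono)
    fix P Q
    assume "P \<in> S" "Q \<in> S"
    with assms(2) have "P \<in> V" "Q \<in> V"
      by auto
    then show "real (card {v \<in> V. adj v P \<and> adj v Q}) \<le> (if Q = P then real k else 1)"
      using deg codeg[of P Q] by auto
  qed
  also have "\<dots> = (\<Sum>P\<in>S. real k + (real (card S) - 1))"
  proof (rule sum.cong[OF refl])
    fix P
    assume P: "P \<in> S"
    with S have "1 \<le> card S"
      by (auto simp: Suc_le_eq card_gt_0_iff)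
    with S P show "(\<Sum>Q\<in>S. if Q = P then real k else 1) = real k + (real (card S) - 1)"
      by (simp add: sum.remove[of S P] card_Diff_singleton of_nat_diff)
  qed
  finally show ?thesis
    by (simp add: add_diff_eq)
qed

lemma independent_set_cauchy_schwarz:
  fixes adj :: "'v \<Rightarrow> 'v \<Rightarrow> bool" and t :: real
  assumes "finite V" "S \<subseteq> V"
    and indep: "\<And>P Q. P \<in> S \<Longrightarrow> Q \<in> S \<Longrightarrow> P \<noteq> Q \<Longrightarrow> \<not> adj P Q"
    and deg: "\<And>P. P \<in> V \<Longrightarrow> card {v \<in> V. adj v P} = k"
    and codeg: "\<And>P Q. P \<in> V \<Longrightarrow> Q \<in> V \<Longrightarrow> P \<noteq> Q \<Longrightarrow> card {v \<in> V. adj v P \<and> adj v Q} \<le> 1"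
  shows "(real (card S) * (real k + t))^2
    \<le> real (card V) * (real (card S) * (real k + real (card S) - 1)
        + 2 * t * real (card {P \<in> S. adj P P}) + t^2 * real (card S))"
proof -
  have S: "finite S"
    using assms(1,2) by (rule finite_subset[rotated])
  define d where "d v = real (card {P \<in> S. adj v P})" for v
  define w where "w v = d v + t * of_bool (v \<in> S)" for v
  have V_S: "V \<inter> S = S"
    using assms(2) by auto
  have card_S: "(\<Sum>v\<in>V. of_bool (v \<in> S)) = real (card S)"
    using assms(1) by (simp add: V_S)
  have "(\<Sum>v\<in>V. d v) = real (card S * k)"
    unfolding d_def by (simp add: sum_card_neighbours[OF assms(1,2) deg] flip: of_nat_sum)
  then have sum_w: "(\<Sum>v\<in>V. w v) = real (card S) * (real k + t)"
    unfolding w_def by (simp add: sum.distrib card_S flip: sum_distrib_left) (simp add: algebra_simps)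
  have "(\<Sum>v\<in>S. d v) = real (card {P \<in> S. adj P P})"
    unfolding d_def by (simp add: sum_card_neighbours_independent[OF S indep] flip: of_nat_sum)
  then have "(\<Sum>v\<in>V. d v * of_bool (v \<in> S)) = real (card {P \<in> S. adj P P})"
    using assms(1) by (simp add: V_S)
  moreover have "(w v)^2 = (d v)^2 + 2 * t * (d v * of_bool (v \<in> S)) + t^2 * of_bool (v \<in> S)" for v
    unfolding w_def by (simp add: power2_eq_square algebra_simps)
  ultimately have "(\<Sum>v\<in>V. (w v)^2)
      = (\<Sum>v\<in>V. (d v)^2) + 2 * t * real (card {P \<in> S. adj P P}) + t^2 * real (card S)"
    by (simp add: sum.distrib card_S flip: sum_distrib_left)
  also have "\<dots> \<le> real (card S) * (real k + real (card S) - 1)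
      + 2 * t * real (card {P \<in> S. adj P P}) + t^2 * real (card S)"
    using sum_card_neighbours_squared_le[OF assms(1,2) deg codeg] unfolding d_def by simp
  finally have "(\<Sum>v\<in>V. (w v)^2) * real (card V) \<le> (real (card S) * (real k + real (card S) - 1)
      + 2 * t * real (card {P \<in> S. adj P P}) + t^2 * real (card S)) * real (card V)"
    by (rule mult_right_mono) simp
  with sum_squared_le_sum_of_squares[of w V] show ?thesis
    unfolding sum_w by (simp add: mult.commute)
qed

section \<open>The quadratic inequality\<close>

lemma quadratic_le_imp_le_root:
  fixes r b c s :: real
  assumes "r > 0" "r * s^2 \<le> b * s + c"
  shows "s \<le> (b + sqrt (b^2 + 4 * r * c)) / (2 * r)"
proof -
  have "(2 * r * s - b)^2 = 4 * r * (r * s^2) - 4 * r * b * s + b^2"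
    by (simp add: power2_eq_square algebra_simps)
  also have "\<dots> \<le> 4 * r * (b * s + c) - 4 * r * b * s + b^2"
    using assms by simp
  also have "\<dots> = b^2 + 4 * r * c"
    by (simp add: algebra_simps)
  finally have "2 * r * s - b \<le> sqrt (b^2 + 4 * r * c)"
    by (rule real_le_rsqrt)
  with assms(1) show ?thesis
    by (simp add: field_simps)
qed

lemma er_independent_quadratic:
  fixes S :: "('a::{finite,field} \<times> 'a \<times> 'a) set set"
  assumes "er_independent S"
  defines "q \<equiv> real CARD('a)"
  shows "(q + sqrt q + 1) / (q^2 + q + 1) * real (card S)^2 \<le> sqrt q * real (card S) + (q + 1)"
proof -
  define s where "s = real (card S)"
  define t where "t = sqrt q"
  define a where "a = real (card {P \<in> S. er_adj P P})"
  define N where "N = q^2 + q + 1"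
  have "q \<ge> 2"
    using two_le_card_field[where 'a='a] unfolding q_def by simp
  then have q_t: "q = t^2" and t: "t > 0" and N: "N > 0"
    unfolding t_def N_def by (simp_all add: add_pos_nonneg)
  have "a \<le> q + 1"
    using card_er_looped_le[OF assms(1)] unfolding a_def q_def by simp
  have S: "S \<subseteq> er_vertices"
    and indep: "\<And>P Q. P \<in> S \<Longrightarrow> Q \<in> S \<Longrightarrow> P \<noteq> Q \<Longrightarrow> \<not> er_adj P Q"
    using assms(1) unfolding er_independent_def by auto
  have codeg: "\<And>P Q. P \<in> er_vertices \<Longrightarrow> Q \<in> er_vertices \<Longrightarrow> P \<noteq> Q
      \<Longrightarrow> card {v \<in> er_vertices. er_adj v P \<and> er_adj v Q} \<le> 1"
    by (simp add: card_er_common_neighbours)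
  have "(s * (q + 1 + t))^2 \<le> N * (s * (q + s) + 2 * t * a + t^2 * s)"
    using independent_set_cauchy_schwarz[OF finite S indep er_degree codeg, where t = t]
    unfolding s_def a_def N_def q_def card_er_vertices by (simp add: add_ac)
  also have "\<dots> = N * s^2 + 2 * t * (N * (t * s + a))"
    by (simp add: q_t power2_eq_square algebra_simps)
  finally have "2 * t * (s^2 * (q + t + 1)) \<le> 2 * t * (N * (t * s + a))"
    by (simp add: N_def q_t power2_eq_square algebra_simps)
  then have "s^2 * (q + t + 1) \<le> N * (t * s + a)"
    using t by simp
  also have "\<dots> \<le> N * (t * s + (q + 1))"
    using \<open>a \<le> q + 1\<close> N by simp
  finally show ?thesis
    using N unfolding s_def t_def N_def by (simp add: field_simps)
qed

theorem mainTheorem10: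
  fixes S :: "('a::{finite, field} \<times> 'a \<times> 'a) set set"
  assumes "er_independent S"
  shows "let q = real (card (UNIV :: 'a set)); r = (q + sqrt q + 1) / (q^2 + q + 1)
         in real (card S) \<le> (sqrt q + sqrt (q + 4 * (q + 1) * r)) / (2 * r)"
proof -
  define q where "q = real (card (UNIV :: 'a set))"
  define r where "r = (q + sqrt q + 1) / (q^2 + q + 1)"
  have "r > 0"
    unfolding r_def q_def by (simp add: add_pos_nonneg)
  moreover have "r * real (card S)^2 \<le> sqrt q * real (card S) + (q + 1)"
    using er_independent_quadratic[OF assms] unfolding r_def q_def .
  ultimately have "real (card S) \<le> (sqrt q + sqrt ((sqrt q)^2 + 4 * r * (q + 1))) / (2 * r)"
    by (rule quadratic_le_imp_le_root)
  moreover have "(sqrt q)^2 + 4 * r * (q + 1) = q + 4 * (q + 1) * r"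
    unfolding q_def by simp
  ultimately have "real (card S) \<le> (sqrt q + sqrt (q + 4 * (q + 1) * r)) / (2 * r)"
    by simp
  then show ?thesis
    unfolding Let_def q_def r_def .
qed

end
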